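(* Let $M$ be a connected smooth manifold of dimension $n\geq2$ with a pseudo-Riemannian metric $g$ and Levi-Civita connection $\nabla$, let $\xi$ be a vector field with $g(\xi,\xi)=\varepsilon\in\{1,-1\}$, let $\eta(X)=\varepsilon g(X,\xi)$, let $\widetilde\nabla_XY=\nabla_XY-\eta(Y)\nabla_X\xi+(\nabla_X\eta)(Y)\xi$, and let $LX=-\nabla_X\xi$. Define $R(X,Y,Z,W)=g(R(X,Y)Z,W)$ and $\widetilde R(X,Y,Z,W)=g(\widetilde R(X,Y)Z,W)$, where $R(X,Y)=[\nabla_X,\nabla_Y]-\nabla_{[X,Y]}$ and $\widetilde R(X,Y)=[\widetilde\nabla_X,\widetilde\nabla_Y]-\widetilde\nabla_{[X,Y]}$. Then $$\widetilde R(X,Y,Z,W)=R(X,Y,Z,W)-g\big((\nabla_XL)Y-(\nabla_YL)X,Z\big)\eta(W)+g\big((\nabla_XL)Y-(\nabla_YL)X,W\big)\eta(Z)+\varepsilon g(LX,W)g(LY,Z)-\varepsilon g(LX,Z)g(LY,W)$$ for all vector fields $X,Y,Z,W$. *)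

theory Defs
  imports Complex_Main
begin

text \<open>Algebraic (Koszul-style) model of a pseudo-Riemannian manifold.
  'f plays the role of the real algebra of smooth functions C(M),
  'v the C(M)-module of smooth vector fields.
  smult: multiplication of a vector field by a function;
  der X h: the derivative X(h) of a function h along X;
  br X Y: the Lie bracket [X,Y];
  g: the pseudo-Riemannian metric; nabla X Y: the Levi-Civita connection.\<close>

locale pseudo_riemannian_lc =
  fixes smult :: "'f::{comm_ring_1, real_algebra_1} \<Rightarrow> 'v::ab_group_add \<Rightarrow> 'v"
    and der :: "'v \<Rightarrow> 'f \<Rightarrow> 'f"
    and br :: "'v \<Rightarrow> 'v \<Rightarrow> 'v"
    and g :: "'v \<Rightarrow> 'v \<Rightarrow> 'f"
    and nabla :: "'v \<Rightarrow> 'v \<Rightarrow> 'v"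
  assumes smult_add_left: "smult (a + b) X = smult a X + smult b X"
    and smult_add_right: "smult a (X + Y) = smult a X + smult a Y"
    and smult_assoc: "smult a (smult b X) = smult (a * b) X"
    and smult_one: "smult 1 X = X"
    and der_add_fun: "der X (a + b) = der X a + der X b"
    and der_scaleR_fun: "der X (scaleR r a) = scaleR r (der X a)"
    and der_mult: "der X (a * b) = der X a * b + a * der X b"
    and der_add_field: "der (X + Y) a = der X a + der Y a"
    and der_smult_field: "der (smult b X) a = b * der X a"
    and br_der: "der (br X Y) a = der X (der Y a) - der Y (der X a)"
    and g_sym: "g X Y = g Y X"
    and g_add: "g (X + Y) Z = g X Z + g Y Z"
    and g_smult: "g (smult a X) Y = a * g X Y"
    and g_nondeg: "(\<forall>Y. g X Y = 0) \<Longrightarrow> X = 0"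
    and nabla_add_dir: "nabla (X + Y) Z = nabla X Z + nabla Y Z"
    and nabla_smult_dir: "nabla (smult a X) Y = smult a (nabla X Y)"
    and nabla_add: "nabla X (Y + Z) = nabla X Y + nabla X Z"
    and nabla_leibniz: "nabla X (smult a Y) = smult (der X a) Y + smult a (nabla X Y)"
    and torsion_free: "nabla X Y - nabla Y X = br X Y"
    and metric_compat: "der X (g Y Z) = g (nabla X Y) Z + g Y (nabla X Z)"

definition curv :: "('v::ab_group_add \<Rightarrow> 'v \<Rightarrow> 'v) \<Rightarrow> ('v \<Rightarrow> 'v \<Rightarrow> 'v) \<Rightarrow> 'v \<Rightarrow> 'v \<Rightarrow> 'v \<Rightarrow> 'v" where
  "curv br D X Y Z = D X (D Y Z) - D Y (D X Z) - D (br X Y) Z"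

definition eta1 :: "('v \<Rightarrow> 'v \<Rightarrow> 'f::comm_ring_1) \<Rightarrow> 'v \<Rightarrow> 'f \<Rightarrow> 'v \<Rightarrow> 'f" where
  "eta1 g xi eps X = eps * g X xi"

definition nabla_eta :: "('v \<Rightarrow> 'f::comm_ring_1 \<Rightarrow> 'f) \<Rightarrow> ('v \<Rightarrow> 'v \<Rightarrow> 'f) \<Rightarrow> ('v \<Rightarrow> 'v \<Rightarrow> 'v)
    \<Rightarrow> 'v \<Rightarrow> 'f \<Rightarrow> 'v \<Rightarrow> 'v \<Rightarrow> 'f" where
  "nabla_eta der g nabla xi eps X Y = der X (eta1 g xi eps Y) - eta1 g xi eps (nabla X Y)"

definition nabla_tilde :: "('f::comm_ring_1 \<Rightarrow> 'v::ab_group_add \<Rightarrow> 'v) \<Rightarrow> ('v \<Rightarrow> 'f \<Rightarrow> 'f)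
    \<Rightarrow> ('v \<Rightarrow> 'v \<Rightarrow> 'f) \<Rightarrow> ('v \<Rightarrow> 'v \<Rightarrow> 'v) \<Rightarrow> 'v \<Rightarrow> 'f \<Rightarrow> 'v \<Rightarrow> 'v \<Rightarrow> 'v" where
  "nabla_tilde smult der g nabla xi eps X Y =
     nabla X Y - smult (eta1 g xi eps Y) (nabla X xi) + smult (nabla_eta der g nabla xi eps X Y) xi"

definition Lop :: "('v::ab_group_add \<Rightarrow> 'v \<Rightarrow> 'v) \<Rightarrow> 'v \<Rightarrow> 'v \<Rightarrow> 'v" where
  "Lop nabla xi X = - nabla X xi"

definition nabla_L :: "('v::ab_group_add \<Rightarrow> 'v \<Rightarrow> 'v) \<Rightarrow> 'v \<Rightarrow> 'v \<Rightarrow> 'v \<Rightarrow> 'v" where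
  "nabla_L nabla xi X Y = nabla X (Lop nabla xi Y) - Lop nabla xi (nabla X Y)"

end

theory Submission
  imports Defs
begin

text \<open>Because \<open>g(\<xi>,\<xi>)\<close> is constant, \<open>\<nabla>\<^sub>A\<xi>\<close> is orthogonal to \<open>\<xi>\<close>, and
  \<open>\<nabla>\<close> with the tilde differs from \<open>\<nabla>\<close> by the tensor \<open>\<epsilon>K\<close>, where
  \<open>K(A,V) = g(V,\<nabla>\<^sub>A\<xi>)\<xi> - g(V,\<xi>)\<nabla>\<^sub>A\<xi>\<close> (\<open>conn_diff\<close>). The curvature of a connection shifted by a tensor
  is the old curvature plus the skew covariant derivative of the tensor plus its commutator term.
  Pairing with \<open>W\<close>, using \<open>\<epsilon>\<^sup>2 = 1\<close> and the orthogonality, and recognising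
  \<open>(\<nabla>\<^sub>XL)Y - (\<nabla>\<^sub>YL)X = -R(X,Y)\<xi>\<close> (torsion-freeness) gives the formula.\<close>

lemma curv_add_tensor:
  fixes D K :: "'v::ab_group_add \<Rightarrow> 'v \<Rightarrow> 'v"
  assumes "\<And>A U V. D A (U + V) = D A U + D A V"
    and "\<And>A U V. K A (U + V) = K A U + K A V"
  shows "curv br (\<lambda>A V. D A V + K A V) X Y Z =
      curv br D X Y Z
      + (D X (K Y Z) + K X (D Y Z) + K X (K Y Z))
      - (D Y (K X Z) + K Y (D X Z) + K Y (K X Z))
      - K (br X Y) Z"
  unfolding curv_def by (simp add: assms algebra_simps)

context pseudo_riemannian_lc
begin

sublocale module smult
  by unfold_locales (simp_all add: smult_add_left smult_add_right smult_assoc smult_one)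

lemma g_minus_left [simp]: "g (- X) Y = - g X Y"
  and g_diff_left: "g (X - Z) Y = g X Y - g Z Y"
proof -
  interpret additive "\<lambda>X. g X Y" by standard (rule g_add)
  show "g (- X) Y = - g X Y" "g (X - Z) Y = g X Y - g Z Y"
    by (rule minus diff)+
qed

lemma nabla_minus [simp]: "nabla X (- Y) = - nabla X Y"
  and nabla_diff: "nabla X (Y - Z) = nabla X Y - nabla X Z"
proof -
  interpret additive "nabla X" by standard (rule nabla_add)
  show "nabla X (- Y) = - nabla X Y" "nabla X (Y - Z) = nabla X Y - nabla X Z"
    by (rule minus diff)+
qed

lemma nabla_diff_dir: "nabla (X - Z) Y = nabla X Y - nabla Z Y"
proof -
  interpret additive "\<lambda>X. nabla X Y" by standard (rule nabla_add_dir)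
  show ?thesis by (rule diff)
qed

lemma der_minus [simp]: "der X (- a) = - der X a"
proof -
  interpret additive "der X" by standard (rule der_add_fun)
  show ?thesis by (rule minus)
qed

lemma der_one [simp]: "der X 1 = 0"
  using der_mult[of X 1 1] by simp

lemma g_nabla_orthogonal:
  assumes "der X (g xi xi) = 0"
  shows "g (nabla X xi) xi = 0"
proof -
  \<comment> \<open>\<open>2\<close> cancels because the function algebra is a real algebra\<close>
  have "scaleR 2 (g (nabla X xi) xi) = 0"
    using metric_compat[of X xi xi] assms g_sym[of xi "nabla X xi"] by (simp add: scaleR_2)
  then show ?thesis by simp
qed

definition conn_diff :: "'v \<Rightarrow> 'v \<Rightarrow> 'v \<Rightarrow> 'v" where
  "conn_diff xi A V = smult (g V (nabla A xi)) xi - smult (g V xi) (nabla A xi)"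

lemma conn_diff_add: "conn_diff xi A (U + V) = conn_diff xi A U + conn_diff xi A V"
  by (simp add: conn_diff_def g_add algebra_simps)

lemma conn_diff_smult: "conn_diff xi A (smult a V) = smult a (conn_diff xi A V)"
  by (simp add: conn_diff_def g_smult algebra_simps)

lemma nabla_tilde_eq:
  assumes "der A eps = 0"
  shows "nabla_tilde smult der g nabla xi eps A V = nabla A V + smult eps (conn_diff xi A V)"
  by (simp add: nabla_tilde_def nabla_eta_def eta1_def conn_diff_def der_mult metric_compat
      assms algebra_simps)

lemma g_conn_diff:
  "g (conn_diff xi A V) W = g V (nabla A xi) * g xi W - g V xi * g (nabla A xi) W"
  by (simp add: conn_diff_def g_diff_left g_smult)

lemma g_nabla_conn_diff:
  "g (nabla A (conn_diff xi B Z)) W =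
     (g (nabla A Z) (nabla B xi) + g Z (nabla A (nabla B xi))) * g xi W
     + g Z (nabla B xi) * g (nabla A xi) W
     - (g (nabla A Z) xi + g Z (nabla A xi)) * g (nabla B xi) W
     - g Z xi * g (nabla A (nabla B xi)) W"
  by (simp add: conn_diff_def nabla_diff nabla_leibniz metric_compat g_add g_diff_left g_smult
      algebra_simps)

lemma g_conn_diff_conn_diff:
  assumes "g xi xi = eps" and "\<And>V. g (nabla V xi) xi = 0"
  shows "g (conn_diff xi A (conn_diff xi B Z)) W =
     - g Z xi * g (nabla B xi) (nabla A xi) * g xi W - eps * g Z (nabla B xi) * g (nabla A xi) W"
proof -
  have "g xi (nabla V xi) = 0" for V
    using assms(2) g_sym by metis
  with assms show ?thesis
    by (simp add: g_conn_diff conn_diff_def g_diff_left g_smult algebra_simps)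
qed

lemma nabla_L_skew:
  "nabla_L nabla xi X Y - nabla_L nabla xi Y X = - curv br nabla X Y xi"
  by (simp add: nabla_L_def Lop_def curv_def nabla_diff_dir flip: torsion_free)

lemma curv_nabla_tilde:
  assumes "\<And>A. der A eps = 0"
  shows "curv br (nabla_tilde smult der g nabla xi eps) X Y Z =
     curv br nabla X Y Z
     + smult eps (nabla X (conn_diff xi Y Z) + conn_diff xi X (nabla Y Z)
                  - nabla Y (conn_diff xi X Z) - conn_diff xi Y (nabla X Z)
                  - conn_diff xi (br X Y) Z)
     + smult (eps * eps) (conn_diff xi X (conn_diff xi Y Z) - conn_diff xi Y (conn_diff xi X Z))"
proof -
  have "nabla_tilde smult der g nabla xi eps = (\<lambda>A V. nabla A V + smult eps (conn_diff xi A V))"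
    using nabla_tilde_eq assms by (simp add: fun_eq_iff)
  then show ?thesis
    by (simp add: curv_add_tensor nabla_add conn_diff_add conn_diff_smult nabla_leibniz assms
        algebra_simps)
qed

lemma g_curv_nabla_tilde:
  assumes der_eps: "\<And>A. der A eps = 0"
    and unit: "g xi xi = eps"
    and eps_sq: "eps * eps = 1"
  shows "g (curv br (nabla_tilde smult der g nabla xi eps) X Y Z) W =
      g (curv br nabla X Y Z) W
      - g (nabla_L nabla xi X Y - nabla_L nabla xi Y X) Z * eta1 g xi eps W
      + g (nabla_L nabla xi X Y - nabla_L nabla xi Y X) W * eta1 g xi eps Z
      + eps * g (Lop nabla xi X) W * g (Lop nabla xi Y) Z
      - eps * g (Lop nabla xi X) Z * g (Lop nabla xi Y) W"
proof -
  have orth: "g (nabla A xi) xi = 0" for A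
    using g_nabla_orthogonal unit der_eps by simp
  then have orth': "g xi (nabla A xi) = 0" for A
    using g_sym by metis
  \<comment> \<open>\<open>g_sym\<close> may only enter in the second pass: it would turn \<open>g (conn_diff \<dots>) W\<close>
    around before the \<open>conn_diff\<close> lemmas fire\<close>
  show ?thesis
    unfolding curv_nabla_tilde[OF der_eps] nabla_L_skew
    by (simp add: eta1_def Lop_def g_add g_diff_left g_smult
        g_conn_diff g_nabla_conn_diff g_conn_diff_conn_diff[OF unit orth] curv_def eps_sq
        algebra_simps)
      (simp add: algebra_simps g_sym unit orth orth')
qed

end

theorem mainTheorem3:
  fixes smult :: "'f::{comm_ring_1, real_algebra_1} \<Rightarrow> 'v::ab_group_add \<Rightarrow> 'v"
    and der :: "'v \<Rightarrow> 'f \<Rightarrow> 'f"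
    and br :: "'v \<Rightarrow> 'v \<Rightarrow> 'v"
    and g :: "'v \<Rightarrow> 'v \<Rightarrow> 'f"
    and nabla :: "'v \<Rightarrow> 'v \<Rightarrow> 'v"
    and xi X Y Z W :: 'v
    and eps :: 'f
  assumes "pseudo_riemannian_lc smult der br g nabla"
    and "eps = 1 \<or> eps = -1"
    and "g xi xi = eps"
  shows "g (curv br (nabla_tilde smult der g nabla xi eps) X Y Z) W =
      g (curv br nabla X Y Z) W
      - g (nabla_L nabla xi X Y - nabla_L nabla xi Y X) Z * eta1 g xi eps W
      + g (nabla_L nabla xi X Y - nabla_L nabla xi Y X) W * eta1 g xi eps Z
      + eps * g (Lop nabla xi X) W * g (Lop nabla xi Y) Z
      - eps * g (Lop nabla xi X) Z * g (Lop nabla xi Y) W"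
proof -
  interpret pseudo_riemannian_lc smult der br g nabla by fact
  have "der A eps = 0" for A
    using assms(2) by auto
  moreover have "eps * eps = 1"
    using assms(2) by auto
  ultimately show ?thesis
    using g_curv_nabla_tilde assms(3) by blast
qed

end
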